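(* For every $0<\delta<0.5$, every $\epsilon>0$ and every $\epsilon'>0$ there exist a domain of databases and a Bayesian inference problem (a prior and a likelihood) on it such that: (i) the mechanism that outputs a single sample from the posterior distribution $p(\theta\mid D)$ is $(\epsilon,\delta)$-differentially private; but (ii) when performing approximate sampling by running SGLD on the database, there is a number of steps $T$ such that the mechanism that outputs the SGLD iterate after $T$ iterations is not $(\epsilon'',\delta)$-differentially private for any $\epsilon''<\epsilon'$.
   Context: A randomized algorithm $M$ mapping databases to outputs is $(\epsilon,\delta)$-differentially private if for all measurable sets $S$ of outputs and all neighboring databases $D,\hat D$ (databases differing in a single record, i.e. at Hamming distance at most 1), $\Pr[M(D)\in S]\le e^{\epsilon}\Pr[M(\hat D)\in S]+\delta$. Stochastic Gradient Langevin Dynamics (SGLD) for a prior $p(\theta)$, likelihood $p(y\mid\theta)$ and database $\{y_1,\dots,y_n\}$ with batch size $b$ and step sizes $\eta_j$ starts from an initial $\theta_0$ and iterates $\theta_{j+1}=\theta_j+\frac{\eta_j}{2}\big[\nabla_\theta\ln p(\theta_j)+\frac{n}{b}\sum_{i\in B_j}\nabla_\theta\ln p(y_i\mid\theta_j)\big]+\sqrt{\eta_j}\,\xi_j$, with $\xi_j\sim\mathcal N(0,1)$ independent. The variant considered is cyclic SGLD: the database is randomly shuffled once and the samples (batch size 1) are then used cyclically in that order. *)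

theory Defs
  imports "HOL-Probability.Probability"
begin

definition neighbouring :: "'r list \<Rightarrow> 'r list \<Rightarrow> bool" where
  "neighbouring D D' \<longleftrightarrow> length D = length D' \<and>
     card {i. i < length D \<and> D ! i \<noteq> D' ! i} \<le> 1"

definition diff_private ::
  "real \<Rightarrow> real \<Rightarrow> 'r list set \<Rightarrow> ('r list \<Rightarrow> real measure) \<Rightarrow> bool" where
  "diff_private eps del Dom M \<longleftrightarrow>
     (\<forall>D\<in>Dom. \<forall>D'\<in>Dom. neighbouring D D' \<longrightarrow>
        (\<forall>S\<in>sets borel. measure (M D) S \<le> exp eps * measure (M D') S + del))"

definition post_unnorm :: "(real \<Rightarrow> real) \<Rightarrow> (real \<Rightarrow> real \<Rightarrow> real) \<Rightarrow> real list \<Rightarrow> real \<Rightarrow> real" where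
  "post_unnorm p0 lik D \<theta> = p0 \<theta> * prod_list (map (\<lambda>y. lik y \<theta>) D)"

definition posterior :: "(real \<Rightarrow> real) \<Rightarrow> (real \<Rightarrow> real \<Rightarrow> real) \<Rightarrow> real list \<Rightarrow> real measure" where
  "posterior p0 lik D =
     density lborel (\<lambda>\<theta>. ennreal (post_unnorm p0 lik D \<theta>) /
                          (\<integral>\<^sup>+ t. ennreal (post_unnorm p0 lik D t) \<partial>lborel))"

definition sgld_step ::
  "(real \<Rightarrow> real) \<Rightarrow> (real \<Rightarrow> real \<Rightarrow> real) \<Rightarrow> nat \<Rightarrow> real \<Rightarrow> real \<Rightarrow> real \<Rightarrow> real \<Rightarrow> real" where
  "sgld_step p0 lik n eta y xi \<theta> =
     \<theta> + eta / 2 * (deriv (\<lambda>t. ln (p0 t)) \<theta> + real n * deriv (\<lambda>t. ln (lik y t)) \<theta>)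
       + sqrt eta * xi"

text \<open>Iterate of cyclic SGLD: the database D is shuffled once by the
  permutation sh of {..<length D}; in step j the record D ! sh (j mod n) is used;
  xi j is the Gaussian noise of step j; eta j the step size; th0 the initial point.\<close>

fun sgld_iter ::
  "(real \<Rightarrow> real) \<Rightarrow> (real \<Rightarrow> real \<Rightarrow> real) \<Rightarrow> (nat \<Rightarrow> real) \<Rightarrow> real \<Rightarrow> real list
     \<Rightarrow> (nat \<Rightarrow> nat) \<Rightarrow> (nat \<Rightarrow> real) \<Rightarrow> nat \<Rightarrow> real" where
  "sgld_iter p0 lik eta th0 D sh xi 0 = th0"
| "sgld_iter p0 lik eta th0 D sh xi (Suc j) =
     sgld_step p0 lik (length D) (eta j) (D ! sh (j mod length D)) (xi j)
       (sgld_iter p0 lik eta th0 D sh xi j)"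

definition sgld_output ::
  "(real \<Rightarrow> real) \<Rightarrow> (real \<Rightarrow> real \<Rightarrow> real) \<Rightarrow> (nat \<Rightarrow> real) \<Rightarrow> real \<Rightarrow> nat \<Rightarrow> real list
     \<Rightarrow> real measure" where
  "sgld_output p0 lik eta th0 T D =
     distr (measure_pmf (pmf_of_set {sh. sh permutes {..<length D}})
              \<Otimes>\<^sub>M PiM {..<T} (\<lambda>_. density lborel std_normal_density))
           borel (\<lambda>(sh, xi). sgld_iter p0 lik eta th0 D sh xi T)"

definition bayes_problem :: "(real \<Rightarrow> real) \<Rightarrow> (real \<Rightarrow> real \<Rightarrow> real) \<Rightarrow> bool" where
  "bayes_problem p0 lik \<longleftrightarrow>
     p0 \<in> borel_measurable borel \<and> (\<forall>\<theta>. 0 < p0 \<theta>) \<and>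
     (\<integral>\<^sup>+ \<theta>. ennreal (p0 \<theta>) \<partial>lborel) = 1 \<and>
     (\<forall>\<theta>. (\<lambda>t. ln (p0 t)) differentiable at \<theta>) \<and>
     (\<forall>y \<theta>. 0 < lik y \<theta>) \<and>
     (\<forall>y. (\<lambda>t. lik y t) \<in> borel_measurable borel) \<and>
     (\<forall>y \<theta>. (\<lambda>t. ln (lik y t)) differentiable at \<theta>) \<and>
     (\<exists>\<nu>::real measure. sets \<nu> = sets borel \<and>
        (\<forall>\<theta>. (\<lambda>y. lik y \<theta>) \<in> borel_measurable \<nu> \<and>
              (\<integral>\<^sup>+ y. ennreal (lik y \<theta>) \<partial>\<nu>) = 1))"

end

theory Submission
  imports Defs
begin

text \<open>Take a standard normal prior and the Bernoulli model \<open>P(y = 1 | \<theta>) = sigmoid (s sin \<theta>)\<close>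
  with \<open>s = \<epsilon>/2\<close>, on databases consisting of one record \<open>0\<close> or \<open>1\<close>. The likelihoods of the
  two records differ at most by the factor \<open>exp s\<close>, so the unnormalised posteriors and the
  evidences of neighbouring databases differ at most by that factor, and a posterior sample is
  \<open>(\<epsilon>, 0)\<close>-private. The gradients of the log-likelihoods at \<open>\<theta> = 0\<close>, however, differ by \<open>s\<close>:
  one SGLD step from \<open>0\<close> with step size \<open>\<eta> = (4a/s)\<^sup>2\<close> outputs \<open>\<surd>\<eta> (a (2y - 1) + \<xi>)\<close>
  with standard normal \<open>\<xi>\<close>. By Chebyshev's inequality the event \<open>\<theta>\<^sub>1 \<ge> 0\<close> has probability at
  least \<open>1 - 1/a\<^sup>2\<close> for \<open>y = 1\<close> and at most \<open>1/a\<^sup>2\<close> for \<open>y = 0\<close>; for \<open>a = 1 + exp \<epsilon>'\<close> and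
  \<open>\<delta> < 1/2\<close> this is incompatible with \<open>(\<epsilon>'', \<delta>)\<close>-privacy for every \<open>\<epsilon>'' \<le> \<epsilon>'\<close>.\<close>

section \<open>Differential privacy of posterior sampling\<close>

lemma neighbouring_sym:
  assumes "neighbouring D D'"
  shows "neighbouring D' D"
proof -
  have "{i. i < length D' \<and> D' ! i \<noteq> D ! i} = {i. i < length D \<and> D ! i \<noteq> D' ! i}"
    using assms by (auto simp: neighbouring_def)
  then show ?thesis using assms unfolding neighbouring_def by metis
qed

lemma neighbouring_singleton: "neighbouring [y] [y']"
proof -
  have "card {i. i < 1 \<and> [y] ! i \<noteq> [y'] ! i} \<le> card {0::nat}"
    by (intro card_mono) auto
  then show ?thesis
    by (simp add: neighbouring_def)
qed

lemma not_diff_privateI: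
  assumes "D \<in> Dom" "D' \<in> Dom" "neighbouring D D'" "S \<in> sets borel" "\<epsilon> \<le> \<epsilon>'"
    and "measure (M D') S \<le> q" and "exp \<epsilon>' * q + \<delta> < measure (M D) S"
  shows "\<not> diff_private \<epsilon> \<delta> Dom M"
proof
  assume "diff_private \<epsilon> \<delta> Dom M"
  then have "measure (M D) S \<le> exp \<epsilon> * measure (M D') S + \<delta>"
    using assms(1-4) by (auto simp: diff_private_def)
  moreover have "exp \<epsilon> * measure (M D') S \<le> exp \<epsilon>' * q"
    using assms(5,6) by (intro mult_mono) auto
  ultimately show False
    using assms(7) by linarith
qed

definition evidence :: "(real \<Rightarrow> real) \<Rightarrow> (real \<Rightarrow> real \<Rightarrow> real) \<Rightarrow> real list \<Rightarrow> ennreal" where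
  "evidence p0 lik D = (\<integral>\<^sup>+ \<theta>. ennreal (post_unnorm p0 lik D \<theta>) \<partial>lborel)"

lemma post_unnorm_Cons: "post_unnorm p0 lik (y # D) \<theta> = lik y \<theta> * post_unnorm p0 lik D \<theta>"
  by (simp add: post_unnorm_def)

context
  fixes p0 :: "real \<Rightarrow> real" and lik :: "real \<Rightarrow> real \<Rightarrow> real"
  assumes bayes: "bayes_problem p0 lik"
begin

lemma post_unnorm_pos: "0 < post_unnorm p0 lik D \<theta>"
proof (induction D)
  case Nil
  then show ?case using bayes by (simp add: post_unnorm_def bayes_problem_def)
next
  case (Cons y D)
  then show ?case using bayes by (simp add: post_unnorm_Cons bayes_problem_def)
qed

lemma post_unnorm_measurable: "post_unnorm p0 lik D \<in> borel_measurable borel"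
proof (induction D)
  case Nil
  then show ?case using bayes by (simp add: post_unnorm_def bayes_problem_def)
next
  case (Cons y D)
  have "lik y \<in> borel_measurable borel" using bayes by (simp add: bayes_problem_def)
  with Cons show ?case by (simp add: post_unnorm_Cons[abs_def])
qed

lemma evidence_pos: "0 < evidence p0 lik D"
proof -
  have "{\<theta>. ennreal (post_unnorm p0 lik D \<theta>) \<noteq> 0} = UNIV"
    using post_unnorm_pos by (auto simp: ennreal_eq_0_iff not_le[symmetric])
  then have "\<not> (AE \<theta> in lborel. ennreal (post_unnorm p0 lik D \<theta>) = 0)"
    by (subst AE_iff_null) auto
  then show ?thesis
    unfolding evidence_def using post_unnorm_measurable
    by (subst (asm) nn_integral_0_iff_AE[symmetric]) (auto simp: zero_less_iff_neq_zero)
qed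

lemma posterior_eq_density:
  assumes "evidence p0 lik D = ennreal z"
  shows "posterior p0 lik D = density lborel (\<lambda>\<theta>. ennreal (post_unnorm p0 lik D \<theta> / z))"
proof -
  have "0 < z" using evidence_pos[of D] assms by simp
  then show ?thesis
    using assms post_unnorm_pos[of D]
    unfolding posterior_def evidence_def[symmetric] by (simp add: divide_ennreal less_imp_le)
qed

lemma prob_space_posterior:
  assumes "evidence p0 lik D < \<infinity>"
  shows "prob_space (posterior p0 lik D)"
proof
  have "emeasure (posterior p0 lik D) UNIV = evidence p0 lik D / evidence p0 lik D"
    unfolding posterior_def evidence_def[symmetric] using post_unnorm_measurable[of D]
    by (simp add: emeasure_density nn_integral_divide evidence_def)
  also have "\<dots> = 1"
    using evidence_pos[of D] assms by simp
  finally show "emeasure (posterior p0 lik D) (space (posterior p0 lik D)) = 1"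
    by (simp add: posterior_def)
qed

lemma post_unnorm_neighbouring_le:
  assumes "neighbouring D D'" and "set D \<subseteq> R" and "set D' \<subseteq> R" and "1 \<le> c"
    and ratio: "\<And>y y'. y \<in> R \<Longrightarrow> y' \<in> R \<Longrightarrow> lik y \<theta> \<le> c * lik y' \<theta>"
  shows "post_unnorm p0 lik D \<theta> \<le> c * post_unnorm p0 lik D' \<theta>"
proof -
  define n where "n = length D"
  define I where "I = {i. i < n \<and> D ! i \<noteq> D' ! i}"
  have n': "length D' = n" and I: "card I \<le> 1"
    using assms(1) by (auto simp: neighbouring_def n_def I_def)
  have lik_pos: "0 < lik y \<theta>" for y
    using bayes by (simp add: bayes_problem_def)
  have "(\<Prod>i<n. lik (D ! i) \<theta>) \<le> (\<Prod>i<n. (if i \<in> I then c else 1) * lik (D' ! i) \<theta>)"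
  proof (rule prod_mono)
    fix i assume "i \<in> {..<n}"
    then have "D ! i \<in> R" "D' ! i \<in> R"
      using assms(2,3) n' nth_mem by (auto simp: n_def)
    then show "0 \<le> lik (D ! i) \<theta> \<and> lik (D ! i) \<theta> \<le> (if i \<in> I then c else 1) * lik (D' ! i) \<theta>"
      using ratio lik_pos[of "D ! i"] \<open>i \<in> {..<n}\<close> by (auto simp: I_def less_imp_le)
  qed
  also have "\<dots> = c ^ card I * (\<Prod>i<n. lik (D' ! i) \<theta>)"
  proof -
    have "{..<n} \<inter> {i. i \<in> I} = I" by (auto simp: I_def)
    then show ?thesis by (simp add: prod.distrib prod.If_cases)
  qed
  also have "\<dots> \<le> c * (\<Prod>i<n. lik (D' ! i) \<theta>)"
    using power_increasing[OF I \<open>1 \<le> c\<close>] lik_pos by (simp add: mult_right_mono prod_nonneg less_imp_le)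
  finally have "prod_list (map (\<lambda>y. lik y \<theta>) D) \<le> c * prod_list (map (\<lambda>y. lik y \<theta>) D')"
    by (simp add: prod.list_conv_set_nth n_def n' atLeast0LessThan)
  then show ?thesis
    using post_unnorm_pos[of "[]"] unfolding post_unnorm_def
    by (simp add: mult_left_mono mult.left_commute)
qed

lemma evidence_le:
  assumes "0 \<le> c" and "\<And>\<theta>. post_unnorm p0 lik D \<theta> \<le> c * post_unnorm p0 lik D' \<theta>"
  shows "evidence p0 lik D \<le> ennreal c * evidence p0 lik D'"
proof -
  have "evidence p0 lik D \<le> (\<integral>\<^sup>+ \<theta>. ennreal c * ennreal (post_unnorm p0 lik D' \<theta>) \<partial>lborel)"
    unfolding evidence_def
    using assms post_unnorm_pos[of D'] by (intro nn_integral_mono) (simp add: ennreal_mult' [symmetric] ennreal_leI)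
  also have "\<dots> = ennreal c * evidence p0 lik D'"
    unfolding evidence_def using post_unnorm_measurable by (simp add: nn_integral_cmult)
  finally show ?thesis .
qed

lemma measure_posterior_le:
  assumes le: "\<And>\<theta>. post_unnorm p0 lik D \<theta> \<le> c * post_unnorm p0 lik D' \<theta>"
    and ge: "\<And>\<theta>. post_unnorm p0 lik D' \<theta> \<le> c * post_unnorm p0 lik D \<theta>"
    and fin: "evidence p0 lik D' < \<infinity>" and S: "S \<in> sets borel"
  shows "measure (posterior p0 lik D) S \<le> c\<^sup>2 * measure (posterior p0 lik D') S"
proof -
  have c: "0 < c"
    using le[of 0] post_unnorm_pos[of D 0] post_unnorm_pos[of D' 0] by (smt (verit) mult_nonpos_nonneg)
  obtain z' where z': "evidence p0 lik D' = ennreal z'" "0 < z'"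
    using fin evidence_pos[of D'] by (cases "evidence p0 lik D'") auto
  have "evidence p0 lik D \<le> ennreal (c * z')"
    using evidence_le[OF _ le] c z' by (simp add: ennreal_mult)
  then obtain z where z: "evidence p0 lik D = ennreal z" "0 < z" "z \<le> c * z'"
    using evidence_pos[of D] by (cases "evidence p0 lik D") (auto simp: top_unique ennreal_le_iff2)
  have "z' \<le> c * z"
    using evidence_le[OF _ ge] c z z' by (simp add: ennreal_mult[symmetric])
  then have inv_z: "1 / z \<le> c / z'"
    using z z' by (simp add: field_simps)
  have pointwise: "post_unnorm p0 lik D \<theta> / z \<le> c\<^sup>2 * (post_unnorm p0 lik D' \<theta> / z')" for \<theta>
  proof -
    have "post_unnorm p0 lik D \<theta> / z \<le> c * post_unnorm p0 lik D' \<theta> * (1 / z)"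
      using le[of \<theta>] z(2) by (simp add: divide_right_mono)
    also have "\<dots> \<le> c * post_unnorm p0 lik D' \<theta> * (c / z')"
      using inv_z c post_unnorm_pos[of D' \<theta>] by (intro mult_left_mono) auto
    finally show ?thesis by (simp add: power2_eq_square mult_ac)
  qed
  have meas: "(\<lambda>\<theta>. ennreal (post_unnorm p0 lik E \<theta> / x)) \<in> borel_measurable borel" for E x
    using post_unnorm_measurable[of E] by simp
  have "emeasure (posterior p0 lik D) S
      = (\<integral>\<^sup>+ \<theta>. ennreal (post_unnorm p0 lik D \<theta> / z) * indicator S \<theta> \<partial>lborel)"
    unfolding posterior_eq_density[OF z(1)] using S meas by (simp add: emeasure_density)
  also have "\<dots> \<le> (\<integral>\<^sup>+ \<theta>. ennreal (c\<^sup>2) * (ennreal (post_unnorm p0 lik D' \<theta> / z') * indicator S \<theta>) \<partial>lborel)"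
    using pointwise by (intro nn_integral_mono) (simp add: ennreal_mult'[symmetric] ennreal_leI split: split_indicator)
  also have "\<dots> = ennreal (c\<^sup>2) * emeasure (posterior p0 lik D') S"
    unfolding posterior_eq_density[OF z'(1)] using S meas
    by (simp add: emeasure_density nn_integral_cmult)
  finally have "emeasure (posterior p0 lik D) S \<le> ennreal (c\<^sup>2) * emeasure (posterior p0 lik D') S" .
  moreover have "emeasure (posterior p0 lik D') S < \<infinity>"
    by (rule order.strict_trans1[OF prob_space.emeasure_le_1[OF prob_space_posterior[OF fin]]]) simp
  ultimately have "enn2real (emeasure (posterior p0 lik D) S)
      \<le> enn2real (ennreal (c\<^sup>2) * emeasure (posterior p0 lik D') S)"
    by (intro enn2real_mono) (simp_all add: ennreal_mult_less_top)
  then show ?thesis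
    unfolding measure_def by (simp add: enn2real_mult)
qed

lemma posterior_diff_private:
  assumes "0 \<le> \<epsilon>" and "0 \<le> \<delta>"
    and records: "\<And>D. D \<in> Dom \<Longrightarrow> set D \<subseteq> R"
    and fin: "\<And>D. D \<in> Dom \<Longrightarrow> evidence p0 lik D < \<infinity>"
    and ratio: "\<And>y y' \<theta>. y \<in> R \<Longrightarrow> y' \<in> R \<Longrightarrow> lik y \<theta> \<le> exp (\<epsilon> / 2) * lik y' \<theta>"
  shows "diff_private \<epsilon> \<delta> Dom (posterior p0 lik)"
  unfolding diff_private_def
proof (intro ballI impI)
  fix D D' and S :: "real set"
  assume D: "D \<in> Dom" "D' \<in> Dom" "neighbouring D D'" and S: "S \<in> sets borel"
  have c: "1 \<le> exp (\<epsilon> / 2)"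
    using \<open>0 \<le> \<epsilon>\<close> by simp
  have "post_unnorm p0 lik D \<theta> \<le> exp (\<epsilon> / 2) * post_unnorm p0 lik D' \<theta>"
    and "post_unnorm p0 lik D' \<theta> \<le> exp (\<epsilon> / 2) * post_unnorm p0 lik D \<theta>" for \<theta>
    using post_unnorm_neighbouring_le[OF D(3) records[OF D(1)] records[OF D(2)] c ratio]
      post_unnorm_neighbouring_le[OF neighbouring_sym[OF D(3)] records[OF D(2)] records[OF D(1)] c ratio]
    by blast+
  then have "measure (posterior p0 lik D) S \<le> (exp (\<epsilon> / 2))\<^sup>2 * measure (posterior p0 lik D') S"
    by (intro measure_posterior_le fin D(2) S)
  also have "(exp (\<epsilon> / 2))\<^sup>2 = exp \<epsilon>"
    by (simp add: power2_eq_square exp_add[symmetric])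
  finally show "measure (posterior p0 lik D) S \<le> exp \<epsilon> * measure (posterior p0 lik D') S + \<delta>"
    using \<open>0 \<le> \<delta>\<close> by linarith
qed

end

section \<open>One step of SGLD on a one-record database\<close>

lemma std_normal_tail_le:
  assumes "0 < a"
  shows "measure std_normal_distribution {x. a \<le> \<bar>x\<bar>} \<le> 1 / a\<^sup>2"
proof -
  have "measure std_normal_distribution {x \<in> space std_normal_distribution. a\<^sup>2 \<le> x\<^sup>2}
      \<le> (\<integral>x. x\<^sup>2 \<partial>std_normal_distribution) / a\<^sup>2"
    using std_normal_distribution_even_moments(2)[of 1] assms
    by (intro integral_Markov_inequality_measure[where A = "space std_normal_distribution"]) auto
  moreover have "{x \<in> space std_normal_distribution. a\<^sup>2 \<le> x\<^sup>2} = {x. a \<le> \<bar>x\<bar>}"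
    using assms by (auto simp: abs_le_square_iff[symmetric])
  ultimately show ?thesis
    using std_normal_distribution_even_moments(1)[of 1] by simp
qed

lemma emeasure_return_pmf_pair:
  assumes "sigma_finite_measure P" and "A \<in> sets (measure_pmf (return_pmf a) \<Otimes>\<^sub>M P)"
  shows "emeasure (measure_pmf (return_pmf a) \<Otimes>\<^sub>M P) A = emeasure P (Pair a -` A)"
  using assms by (subst sigma_finite_measure.emeasure_pair_measure_alt) simp_all

lemma sgld_iter_1_measurable:
  assumes "0 \<in> I"
  shows "(\<lambda>(sh, xi). sgld_iter p0 lik eta th0 D sh xi 1)
           \<in> borel_measurable (measure_pmf p \<Otimes>\<^sub>M PiM I (\<lambda>_. std_normal_distribution))"
    (is "_ \<in> borel_measurable ?M")
proof -
  have "(\<lambda>q. snd q 0) \<in> measurable ?M std_normal_distribution"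
    using assms by (intro measurable_compose[OF measurable_snd] measurable_component_singleton)
  moreover have "(\<lambda>\<xi>. sgld_step p0 lik (length D) (eta 0) (D ! k) \<xi> th0) \<in> borel_measurable std_normal_distribution" for k
    unfolding sgld_step_def by measurable
  ultimately have "(\<lambda>q. sgld_step p0 lik (length D) (eta 0) (D ! k) (snd q 0) th0) \<in> borel_measurable ?M" for k
    by (rule measurable_compose)
  moreover have "(\<lambda>q. fst q (0 mod length D)) \<in> measurable ?M (count_space UNIV)"
    by (rule measurable_compose[OF measurable_fst]) simp
  ultimately have "(\<lambda>q. (\<lambda>k. sgld_step p0 lik (length D) (eta 0) (D ! k) (snd q 0) th0) (fst q (0 mod length D)))
      \<in> borel_measurable ?M"
    by (rule measurable_compose_countable)
  then show ?thesis
    by (simp add: case_prod_beta')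
qed

lemma sgld_output_singleton:
  "sgld_output p0 lik eta th0 1 [y]
     = distr std_normal_distribution borel (\<lambda>\<xi>. sgld_step p0 lik 1 (eta 0) y \<xi> th0)"
  (is "_ = distr _ _ ?G")
proof (rule measure_eqI)
  show sets_eq: "sets (sgld_output p0 lik eta th0 1 [y]) = sets (distr std_normal_distribution borel ?G)"
    by (simp only: sgld_output_def sets_distr)
  fix S assume "S \<in> sets (sgld_output p0 lik eta th0 1 [y])"
  then have S: "S \<in> sets borel" by (simp only: sets_eq sets_distr)
  define P where "P = PiM {..<1::nat} (\<lambda>_. std_normal_distribution)"
  define M where "M = measure_pmf (return_pmf (id :: nat \<Rightarrow> nat)) \<Otimes>\<^sub>M P"
  define F where "F = (\<lambda>(sh, xi). sgld_iter p0 lik eta th0 [y] sh xi 1)"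
  have P: "sigma_finite_measure P"
    unfolding P_def by (intro prob_space_imp_sigma_finite prob_space_PiM) (auto simp: prob_space_normal_density)
  have F: "F \<in> borel_measurable M"
    unfolding F_def M_def P_def by (rule sgld_iter_1_measurable) simp
  have G: "?G \<in> borel_measurable borel"
    unfolding sgld_step_def by measurable
  have "{sh. sh permutes {..<1::nat}} = {id}"
    using permutes_sing[of _ "0::nat"] by (auto simp: lessThan_Suc)
  then have shuffle: "pmf_of_set {sh. sh permutes {..<length [y]}} = return_pmf id"
    by (simp add: pmf_of_set_singleton)
  have "emeasure (sgld_output p0 lik eta th0 1 [y]) S = emeasure M (F -` S \<inter> space M)"
    unfolding sgld_output_def shuffle F_def[symmetric] P_def[symmetric] M_def[symmetric]
    using F S by (simp add: emeasure_distr)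
  also have "\<dots> = emeasure P (Pair id -` (F -` S \<inter> space M))"
    unfolding M_def using measurable_sets[OF F S] by (intro emeasure_return_pmf_pair P) (simp add: M_def)
  also have "\<dots> = emeasure P ((\<lambda>xi. xi 0) -` (?G -` S) \<inter> space P)"
    by (rule arg_cong[where f = "emeasure P"]) (auto simp: F_def M_def space_pair_measure)
  also have "\<dots> = emeasure (distr P std_normal_distribution (\<lambda>xi. xi 0)) (?G -` S)"
    using G S by (subst emeasure_distr) (auto simp: P_def measurable_sets_borel)
  also have "distr P std_normal_distribution (\<lambda>xi. xi 0) = std_normal_distribution"
    unfolding P_def by (intro distr_PiM_component) (auto simp: prob_space_normal_density)
  finally show "emeasure (sgld_output p0 lik eta th0 1 [y]) S = emeasure (distr std_normal_distribution borel ?G) S"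
    using G S by (simp add: emeasure_distr)
qed

section \<open>A Bernoulli model\<close>

lemma ln_std_normal_density_has_derivative:
  "((\<lambda>t. ln (std_normal_density t)) has_real_derivative - \<theta>) (at \<theta>)"
proof -
  have "(\<lambda>t. ln (std_normal_density t)) = (\<lambda>t. ln (1 / sqrt (2 * pi)) - t\<^sup>2 / 2)"
    by (simp add: std_normal_density_def ln_div fun_eq_iff)
  then show ?thesis
    by (auto intro!: derivative_eq_intros)
qed

lemma one_add_exp_neq_0 [simp]: "1 + exp (x::real) \<noteq> 0"
  by (smt (verit) exp_gt_zero)

text \<open>The sine bounds the log-likelihood ratio of the two
  records by \<open>s\<close>, while the gradient at \<open>\<theta> = 0\<close> still depends on the record.\<close>

definition bernoulli_lik :: "real \<Rightarrow> real \<Rightarrow> real \<Rightarrow> real" where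
  "bernoulli_lik s y \<theta> = exp (y * s * sin \<theta>) / (1 + exp (s * sin \<theta>))"

lemma bernoulli_lik_pos: "0 < bernoulli_lik s y \<theta>"
  by (simp add: bernoulli_lik_def add_pos_pos)

lemma ln_bernoulli_lik_has_derivative:
  "((\<lambda>t. ln (bernoulli_lik s y t)) has_real_derivative
      s * cos \<theta> * (y - exp (s * sin \<theta>) / (1 + exp (s * sin \<theta>)))) (at \<theta>)"
proof -
  have "(\<lambda>t. ln (bernoulli_lik s y t)) = (\<lambda>t. y * s * sin t - ln (1 + exp (s * sin t)))"
    by (simp add: bernoulli_lik_def ln_div add_pos_pos fun_eq_iff)
  then show ?thesis
    by (auto intro!: derivative_eq_intros simp: add_pos_pos field_simps)
qed

lemma bernoulli_lik_le_1:
  assumes "y \<in> {0, 1}"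
  shows "bernoulli_lik s y \<theta> \<le> 1"
  using assms by (auto simp: bernoulli_lik_def add_pos_pos)

lemma bernoulli_lik_ratio:
  assumes "0 \<le> s" and "y \<in> {0, 1}" and "y' \<in> {0, 1}"
  shows "bernoulli_lik s y \<theta> \<le> exp s * bernoulli_lik s y' \<theta>"
proof -
  have "y * s * sin \<theta> \<le> s + y' * s * sin \<theta>"
    using assms mult_left_mono[OF sin_le_one \<open>0 \<le> s\<close>] mult_left_mono[OF _ \<open>0 \<le> s\<close>, of "-1" "sin \<theta>"]
    by auto
  then have "exp (y * s * sin \<theta>) \<le> exp s * exp (y' * s * sin \<theta>)"
    by (simp add: exp_add[symmetric])
  then show ?thesis
    by (simp add: bernoulli_lik_def add_pos_pos divide_right_mono)
qed

lemma bayes_problem_bernoulli: "bayes_problem std_normal_density (bernoulli_lik s)"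
proof -
  define \<nu> where "\<nu> = distr (count_space {0, 1}) borel (\<lambda>y::real. y)"
  have "(\<integral>\<^sup>+ y. ennreal (bernoulli_lik s y \<theta>) \<partial>\<nu>) = 1" for \<theta>
  proof -
    have "(\<integral>\<^sup>+ y. ennreal (bernoulli_lik s y \<theta>) \<partial>\<nu>)
        = ennreal (bernoulli_lik s 0 \<theta>) + ennreal (bernoulli_lik s 1 \<theta>)"
      unfolding \<nu>_def
      by (subst nn_integral_distr) (auto simp: nn_integral_count_space_finite bernoulli_lik_def)
    also have "\<dots> = 1"
      by (simp add: bernoulli_lik_def add_pos_pos divide_ennreal ennreal_plus[symmetric] add_divide_distrib[symmetric] del: ennreal_plus)
    finally show ?thesis .
  qed
  moreover have "sets \<nu> = sets borel"
    by (simp add: \<nu>_def)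
  moreover have "(\<lambda>y. bernoulli_lik s y \<theta>) \<in> borel_measurable \<nu>" for \<theta>
    unfolding \<nu>_def by (simp add: bernoulli_lik_def)
  moreover have "(\<lambda>t. bernoulli_lik s y t) \<in> borel_measurable borel" for y
    unfolding bernoulli_lik_def by measurable
  moreover have "(\<integral>\<^sup>+ \<theta>. ennreal (std_normal_density \<theta>) \<partial>lborel) = 1"
    using prob_space.emeasure_space_1[OF prob_space_normal_density]
    by (simp add: emeasure_density)
  moreover have "(\<lambda>t. ln (std_normal_density t)) differentiable at \<theta>" for \<theta>
    using ln_std_normal_density_has_derivative real_differentiable_def by blast
  moreover have "(\<lambda>t. ln (bernoulli_lik s y t)) differentiable at \<theta>" for y \<theta>
    using ln_bernoulli_lik_has_derivative real_differentiable_def by blast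
  ultimately show ?thesis
    unfolding bayes_problem_def by (auto simp: normal_density_pos bernoulli_lik_pos)
qed

lemma evidence_bernoulli_le_1:
  assumes "set D \<subseteq> {0, 1}"
  shows "evidence std_normal_density (bernoulli_lik s) D \<le> 1"
proof -
  have "post_unnorm std_normal_density (bernoulli_lik s) D \<theta> \<le> std_normal_density \<theta>" for \<theta>
    using assms
  proof (induction D)
    case Nil
    then show ?case by (simp add: post_unnorm_def)
  next
    case (Cons y D)
    have "bernoulli_lik s y \<theta> * post_unnorm std_normal_density (bernoulli_lik s) D \<theta>
        \<le> post_unnorm std_normal_density (bernoulli_lik s) D \<theta>"
      using Cons.prems post_unnorm_pos[OF bayes_problem_bernoulli, of s D \<theta>] bernoulli_lik_pos[of s y \<theta>]
      by (intro mult_left_le_one_le bernoulli_lik_le_1) auto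
    with Cons show ?case
      by (simp add: post_unnorm_Cons)
  qed
  then have "evidence std_normal_density (bernoulli_lik s) D \<le> (\<integral>\<^sup>+ \<theta>. ennreal (std_normal_density \<theta>) \<partial>lborel)"
    unfolding evidence_def by (intro nn_integral_mono ennreal_leI)
  also have "\<dots> = 1"
    using bayes_problem_bernoulli by (simp add: bayes_problem_def)
  finally show ?thesis .
qed

lemma sgld_step_bernoulli_at_0:
  "sgld_step std_normal_density (bernoulli_lik s) 1 \<eta> y \<xi> 0 = \<eta> * s * (2 * y - 1) / 4 + sqrt \<eta> * \<xi>"
proof -
  have prior: "deriv (\<lambda>t. ln (std_normal_density t)) 0 = 0"
    using DERIV_imp_deriv[OF ln_std_normal_density_has_derivative[of 0]] by simp
  have lik: "deriv (\<lambda>t. ln (bernoulli_lik s y t)) 0 = s * (y - 1 / 2)"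
    using DERIV_imp_deriv[OF ln_bernoulli_lik_has_derivative[of s y 0]] by simp
  show ?thesis
    unfolding sgld_step_def prior lik by (simp add: field_simps)
qed

lemma sgld_bernoulli_separation:
  assumes "0 < s" and "0 < a"
  defines "sgld \<equiv> sgld_output std_normal_density (bernoulli_lik s) (\<lambda>_. (4 * a / s)\<^sup>2) 0 1"
  shows "measure (sgld [0]) {0..} \<le> 1 / a\<^sup>2" and "1 - 1 / a\<^sup>2 \<le> measure (sgld [1]) {0..}"
proof -
  interpret N: prob_space std_normal_distribution
    by (simp add: prob_space_normal_density)
  define r where "r = 4 * a / s"
  have r: "0 < r" "r * s / 4 = a"
    using assms by (simp_all add: r_def)
  have step: "sgld_step std_normal_density (bernoulli_lik s) 1 (r\<^sup>2) y \<xi> 0 = r * (a * (2 * y - 1) + \<xi>)" for y \<xi>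
  proof -
    have "r\<^sup>2 * s * (2 * y - 1) / 4 = r * (r * s / 4) * (2 * y - 1)"
      by (simp add: power2_eq_square)
    then show ?thesis
      unfolding sgld_step_bernoulli_at_0 using r by (simp add: algebra_simps)
  qed
  have out: "measure (sgld [y]) {0..} = measure std_normal_distribution {\<xi>. a * (1 - 2 * y) \<le> \<xi>}" for y
  proof -
    have "(\<lambda>\<xi>. r * (a * (2 * y - 1) + \<xi>)) \<in> borel_measurable std_normal_distribution"
      by simp
    moreover have "{\<xi>. 0 \<le> r * (a * (2 * y - 1) + \<xi>)} = {\<xi>. a * (1 - 2 * y) \<le> \<xi>}"
      using r(1) by (auto simp: zero_le_mult_iff right_diff_distrib)
    ultimately show ?thesis
      unfolding sgld_def r_def[symmetric] sgld_output_singleton step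
      by (simp add: measure_distr vimage_def)
  qed
  have tail: "measure std_normal_distribution {\<xi>. a \<le> \<bar>\<xi>\<bar>} \<le> 1 / a\<^sup>2"
    using std_normal_tail_le[OF \<open>0 < a\<close>] .
  have "measure std_normal_distribution {\<xi>. a \<le> \<xi>} \<le> measure std_normal_distribution {\<xi>. a \<le> \<bar>\<xi>\<bar>}"
    by (intro N.finite_measure_mono) auto
  then show "measure (sgld [0]) {0..} \<le> 1 / a\<^sup>2"
    using out[of 0] tail by simp
  have "measure std_normal_distribution {\<xi>. \<xi> < - a} \<le> measure std_normal_distribution {\<xi>. a \<le> \<bar>\<xi>\<bar>}"
    by (intro N.finite_measure_mono) auto
  moreover have "measure std_normal_distribution {\<xi>. - a \<le> \<xi>} = 1 - measure std_normal_distribution {\<xi>. \<xi> < - a}"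
  proof -
    have "- {\<xi>. \<xi> < - a} = {\<xi>. - a \<le> \<xi>}"
      by auto
    then show ?thesis
      using N.prob_compl[of "{\<xi>. \<xi> < - a}"] by (simp add: Compl_eq_Diff_UNIV[symmetric])
  qed
  ultimately show "1 - 1 / a\<^sup>2 \<le> measure (sgld [1]) {0..}"
    using out[of 1] tail by simp
qed

lemma prob_space_bernoulli_posterior:
  assumes "set D \<subseteq> {0, 1}"
  shows "prob_space (posterior std_normal_density (bernoulli_lik s) D)"
  by (intro prob_space_posterior[OF bayes_problem_bernoulli]
      order.strict_trans1[OF evidence_bernoulli_le_1[OF assms]]) simp

lemma bernoulli_posterior_diff_private:
  assumes "0 \<le> \<epsilon>" and "0 \<le> \<delta>" and records: "\<And>D. D \<in> Dom \<Longrightarrow> set D \<subseteq> {0, 1}"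
  shows "diff_private \<epsilon> \<delta> Dom (posterior std_normal_density (bernoulli_lik (\<epsilon> / 2)))"
proof (rule posterior_diff_private[OF bayes_problem_bernoulli assms])
  show "evidence std_normal_density (bernoulli_lik (\<epsilon> / 2)) D < \<infinity>" if "D \<in> Dom" for D
    by (rule order.strict_trans1[OF evidence_bernoulli_le_1[OF records[OF that]]]) simp
  show "bernoulli_lik (\<epsilon> / 2) y \<theta> \<le> exp (\<epsilon> / 2) * bernoulli_lik (\<epsilon> / 2) y' \<theta>"
    if "y \<in> {0, 1}" and "y' \<in> {0, 1}" for y y' \<theta>
    using \<open>0 \<le> \<epsilon>\<close> that by (intro bernoulli_lik_ratio) auto
qed

lemma sgld_bernoulli_not_diff_private:
  assumes "0 < s" and "0 < \<epsilon>'" and "\<delta> < 1 / 2" and "\<epsilon> \<le> \<epsilon>'" and "[0] \<in> Dom" and "[1] \<in> Dom"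
  shows "\<not> diff_private \<epsilon> \<delta> Dom
           (sgld_output std_normal_density (bernoulli_lik s) (\<lambda>_. (4 * (1 + exp \<epsilon>') / s)\<^sup>2) 0 1)"
proof -
  define a where "a = 1 + exp \<epsilon>'"
  define M where "M = sgld_output std_normal_density (bernoulli_lik s) (\<lambda>_. (4 * a / s)\<^sup>2) 0 1"
  have a: "2 < a"
    using assms by (simp add: a_def)
  have "exp \<epsilon>' * (1 / a\<^sup>2) + 1 / a\<^sup>2 = 1 / a"
    using a by (simp add: a_def[symmetric] power2_eq_square field_simps)
  moreover have "1 / a < 1 / 2"
    using a by simp
  ultimately have "exp \<epsilon>' * (1 / a\<^sup>2) + \<delta> < 1 - 1 / a\<^sup>2"
    using \<open>\<delta> < 1 / 2\<close> by linarith
  also have "\<dots> \<le> measure (M [1]) {0..}"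
    using sgld_bernoulli_separation(2)[OF \<open>0 < s\<close>, of a] a by (simp add: M_def)
  finally have sep1: "exp \<epsilon>' * (1 / a\<^sup>2) + \<delta> < measure (M [1]) {0..}" .
  have sep0: "measure (M [0]) {0..} \<le> 1 / a\<^sup>2"
    using sgld_bernoulli_separation(1)[OF \<open>0 < s\<close>, of a] a by (simp add: M_def)
  show ?thesis
    unfolding a_def[symmetric] M_def[symmetric]
    by (rule not_diff_privateI[OF assms(6,5) neighbouring_singleton _ assms(4) sep0 sep1]) simp
qed

theorem theorem1:
  fixes \<delta> \<epsilon> \<epsilon>' :: real
  assumes "0 < \<delta>" and "\<delta> < 0.5" and "0 < \<epsilon>" and "0 < \<epsilon>'"
  shows "\<exists>(Dom :: real list set) p0 lik.
           bayes_problem p0 lik \<and>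
           (\<forall>D\<in>Dom. prob_space (posterior p0 lik D)) \<and>
           diff_private \<epsilon> \<delta> Dom (posterior p0 lik) \<and>
           (\<exists>(eta :: nat \<Rightarrow> real) th0 T. (\<forall>j. 0 < eta j) \<and>
              (\<forall>\<epsilon>''. \<epsilon>'' < \<epsilon>' \<longrightarrow>
                 \<not> diff_private \<epsilon>'' \<delta> Dom (sgld_output p0 lik eta th0 T)))"
proof -
  define lik where "lik = bernoulli_lik (\<epsilon> / 2)"
  define Dom :: "real list set" where "Dom = {[0], [1]}"
  define \<eta> where "\<eta> = (4 * (1 + exp \<epsilon>') / (\<epsilon> / 2))\<^sup>2"
  have records: "set D \<subseteq> {0, 1}" if "D \<in> Dom" for D
    using that by (auto simp: Dom_def)
  have "\<forall>D\<in>Dom. prob_space (posterior std_normal_density lik D)"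
    using records prob_space_bernoulli_posterior by (simp add: lik_def)
  moreover have "diff_private \<epsilon> \<delta> Dom (posterior std_normal_density lik)"
    unfolding lik_def using assms records by (intro bernoulli_posterior_diff_private) auto
  moreover have "\<not> diff_private \<epsilon>'' \<delta> Dom (sgld_output std_normal_density lik (\<lambda>_. \<eta>) 0 1)"
    if "\<epsilon>'' < \<epsilon>'" for \<epsilon>''
    unfolding lik_def \<eta>_def using assms that
    by (intro sgld_bernoulli_not_diff_private) (auto simp: Dom_def)
  moreover have "0 < \<eta>"
    using assms add_pos_pos[OF zero_less_one exp_gt_zero[of \<epsilon>']] unfolding \<eta>_def by simp
  ultimately show ?thesis
    using bayes_problem_bernoulli[of "\<epsilon> / 2"] unfolding lik_def[symmetric]
    by (intro exI[of _ Dom] exI[of _ std_normal_density] exI[of _ lik] conjI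
        exI[of _ "\<lambda>_. \<eta>"] exI[of _ "0::real"] exI[of _ "1::nat"]) auto
qed

end
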